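(* Let $k<n$ and let $G=[I_k\mid A]$ be a $k\times n$ binary matrix in systematic form, where $A$ is a $k\times(n-k)$ binary matrix whose $i$-th row is $g_i\in(\mathbb{F}_2)^{n-k}$. Let $\mathcal{C}\subseteq(\mathbb{F}_2)^n$ be the binary linear code spanned by the rows of $G$. Let $X_1,\dots,X_n$ be i.i.d. $\mathbb{F}_2$-valued random variables, and for $x\in\mathbb{F}_2$ write $P(X_1=x)=\tfrac12+v(x)$. Thus $v(0)=-v(1)$. Use the convention $v(\cdot)^0=1$ and $v(\cdot)^1=v(\cdot)$. Let $\bar Y=G(X_1,\dots,X_n)^T$. For $\gamma=(\gamma_1,\dots,\gamma_k)\in(\mathbb{F}_2)^k$ and $b=(b_1,\dots,b_n)\in(\mathbb{F}_2)^n$ of Hamming weight $W(b)$, define $$T(b,\gamma)=\frac{1}{2^{\,n-W(b)}}\sum_{\omega=(\omega_{k+1},\dots,\omega_n)\in(\mathbb{F}_2)^{n-k}}\ \prod_{i=1}^{k}v(\gamma_i+g_i\cdot\omega)^{b_i}\prod_{j=k+1}^{n}v(\omega_j)^{b_j},$$ where $g_i\cdot\omega$ denotes the standard dot product over $\mathbb{F}_2$. Then: (i) $P(\bar Y=\gamma)=\sum_{b\in(\mathbb{F}_2)^n}T(b,\gamma)$; (ii) $T(b,\gamma)=0$ for every $b\notin\mathcal{C}$ and every $\gamma$; (iii) $T(0,\gamma)=2^{-k}$. Consequently, $$P(\bar Y=\gamma)-\frac{1}{2^k}=\sum_{b\in\mathcal{C}\setminus\{0\}}T(b,\gamma)$$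 for every $\gamma\in(\mathbb{F}_2)^k$.
   Context: A binary matrix $G$ is in systematic form if its first $k$ columns form the $k\times k$ identity matrix $I_k$. The Hamming weight $W(b)$ of $b\in(\mathbb{F}_2)^n$ is the number of indices $i$ with $b_i=1$. *)

theory Defs
  imports "HOL-Probability.Probability" "HOL-Library.Z2"
begin

definition vecs :: "nat set \<Rightarrow> (nat \<Rightarrow> bit) set" where
  "vecs I = {b. \<forall>i. i \<notin> I \<longrightarrow> b i = 0}"

text \<open>Systematic form of a k x n matrix G (rows 1..k, columns 1..n): first k columns form I_k.\<close>
definition systematic :: "nat \<Rightarrow> (nat \<Rightarrow> nat \<Rightarrow> bit) \<Rightarrow> bool" where
  "systematic k G \<longleftrightarrow> (\<forall>i\<in>{1..k}. \<forall>j\<in>{1..k}. G i j = (if i = j then 1 else 0))"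

definition code :: "nat \<Rightarrow> nat \<Rightarrow> (nat \<Rightarrow> nat \<Rightarrow> bit) \<Rightarrow> (nat \<Rightarrow> bit) set" where
  "code k n G = {b \<in> vecs {1..n}. \<exists>c \<in> vecs {1..k}. \<forall>j\<in>{1..n}. b j = (\<Sum>i\<in>{1..k}. c i * G i j)}"

definition hweight :: "nat \<Rightarrow> (nat \<Rightarrow> bit) \<Rightarrow> nat" where
  "hweight n b = card {i\<in>{1..n}. b i = 1}"

definition bexp :: "bit \<Rightarrow> nat" where
  "bexp b = (if b = 1 then 1 else 0)"

text \<open>Row g_i of A = columns k+1..n of G, dotted with omega = (omega_{k+1},...,omega_n).\<close>
definition gdot :: "nat \<Rightarrow> nat \<Rightarrow> (nat \<Rightarrow> nat \<Rightarrow> bit) \<Rightarrow> nat \<Rightarrow> (nat \<Rightarrow> bit) \<Rightarrow> bit" where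
  "gdot k n G i \<omega> = (\<Sum>j\<in>{k+1..n}. G i j * \<omega> j)"

definition T :: "nat \<Rightarrow> nat \<Rightarrow> (nat \<Rightarrow> nat \<Rightarrow> bit) \<Rightarrow> (bit \<Rightarrow> real)
                 \<Rightarrow> (nat \<Rightarrow> bit) \<Rightarrow> (nat \<Rightarrow> bit) \<Rightarrow> real" where
  "T k n G v b \<gamma> = 1 / 2 ^ (n - hweight n b) *
     (\<Sum>\<omega>\<in>vecs {k+1..n}.
        (\<Prod>i\<in>{1..k}. v (\<gamma> i + gdot k n G i \<omega>) ^ bexp (b i)) *
        (\<Prod>j\<in>{k+1..n}. v (\<omega> j) ^ bexp (b j)))"

definition Ybar :: "nat \<Rightarrow> (nat \<Rightarrow> nat \<Rightarrow> bit) \<Rightarrow> (nat \<Rightarrow> 'a \<Rightarrow> bit) \<Rightarrow> nat \<Rightarrow> 'a \<Rightarrow> bit" where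
  "Ybar n G X i x = (\<Sum>j\<in>{1..n}. G i j * X j x)"

end

theory Submission
  imports Defs
begin

(* Write \<omega> for the free coordinates (k+1..n) of x \<in> F_2^n.  Because G = [I_k | A]
   is systematic, the solutions of G x = \<gamma> are exactly the vectors lift \<gamma> \<omega>, whose first k
   coordinates are \<gamma>_i + g_i.\<omega> and whose last n-k coordinates are \<omega>.  By independence,
     P(Ybar = \<gamma>) = \<Sum>_\<omega> \<Prod>_t (1/2 + v (lift \<gamma> \<omega> t)),
   and expanding each product over the subsets of {1..n} (indexed by b \<in> F_2^n) and exchanging
   the two sums gives (i).  For (ii), if b is not a codeword then some check column j0 has odd
   parity against b; toggling \<omega>_j0 shifts lift \<gamma> \<omega> by that column, and since v(x+1) = -v(x)
   (a consequence of P(X=0) + P(X=1) = 1) the summand of T(b,\<gamma>) changes sign, so the sum is 0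
   by a sign-reversing involution.  (iii) is a count of the 2^(n-k) free vectors, and the final
   identity follows from (i)-(iii) by discarding the non-codewords and splitting off b = 0.
   The file develops: bit vectors and the product expansion; the character chi and the
   sign-reversing involution; the parametrisation of the fibres of a systematic code; the
   vanishing of T off the code; the probabilistic computation; and finally the theorem. *)

(* Keep bit arithmetic in ring form instead of rewriting it to XOR/AND, so that ring lemmas apply. *)
declare add_bit_eq_xor[simp del] mult_bit_eq_and[simp del]

lemma bit_add_eq_1_iff_neq: "(x::bit) + y = 1 \<longleftrightarrow> x \<noteq> y"
  by (cases x; cases y) auto

lemma bij_betw_Pow_vecs: "bij_betw (\<lambda>B i. of_bool (i \<in> B)) (Pow I) (vecs I)"
  by (rule bij_betw_byWitness[where f'="\<lambda>b. {i\<in>I. b i = 1}"])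
     (auto simp: vecs_def fun_eq_iff)

lemma finite_vecs: "finite I \<Longrightarrow> finite (vecs I)"
  using bij_betw_finite[OF bij_betw_Pow_vecs] by auto

lemma card_vecs: "finite I \<Longrightarrow> card (vecs I) = 2 ^ card I"
  using bij_betw_same_card[OF bij_betw_Pow_vecs, of I] by (simp add: card_Pow)

(* With c = 1/2 this produces the weight
   2^-(n - W(b)) in T. *)
lemma prod_plus_expand:
  fixes c :: "'c :: comm_semiring_1" and a :: "nat \<Rightarrow> 'c"
  assumes "finite I"
  shows "(\<Prod>t\<in>I. c + a t)
       = (\<Sum>b\<in>vecs I. c ^ card {t\<in>I. b t \<noteq> 1} * (\<Prod>t\<in>I. a t ^ bexp (b t)))"
proof -
  have subset_summand: "(\<Prod>t\<in>B. a t) * (\<Prod>t\<in>I-B. c)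
      = c ^ card {t\<in>I. of_bool (t \<in> B) \<noteq> (1::bit)} * (\<Prod>t\<in>I. a t ^ bexp (of_bool (t \<in> B)))"
    if "B \<subseteq> I" for B
  proof -
    have "(\<Prod>t\<in>I. a t ^ bexp (of_bool (t \<in> B))) = (\<Prod>t\<in>I. if t \<in> B then a t else 1)"
      by (rule prod.cong) (auto simp: bexp_def)
    also have "\<dots> = (\<Prod>t\<in>B. a t)"
      using prod.If_cases[OF assms, of "\<lambda>t. t \<in> B" a "\<lambda>_. 1"] that
      by (simp add: Int_absorb1)
    finally show ?thesis
      using that by (simp add: mult.commute set_diff_eq)
  qed
  have "(\<Prod>t\<in>I. c + a t) = (\<Sum>B\<in>Pow I. (\<Prod>t\<in>B. a t) * (\<Prod>t\<in>I-B. c))"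
    using prod_add[OF assms, of a "\<lambda>_. c"] by (simp add: add.commute)
  also have "\<dots> = (\<Sum>B\<in>Pow I. c ^ card {t\<in>I. of_bool (t \<in> B) \<noteq> (1::bit)}
                      * (\<Prod>t\<in>I. a t ^ bexp (of_bool (t \<in> B))))"
    by (rule sum.cong[OF refl], rule subset_summand) blast
  also have "\<dots> = (\<Sum>b\<in>vecs I. c ^ card {t\<in>I. b t \<noteq> 1} * (\<Prod>t\<in>I. a t ^ bexp (b t)))"
    by (rule sum.reindex_bij_betw[OF bij_betw_Pow_vecs])
  finally show ?thesis .
qed

definition chi :: "bit \<Rightarrow> real" where
  "chi x = (if x = 0 then 1 else -1)"

lemma chi_add: "chi (x + y) = chi x * chi y"
  by (cases x; cases y) (auto simp: chi_def)

lemma chi_sum: "finite A \<Longrightarrow> chi (\<Sum>i\<in>A. f i) = (\<Prod>i\<in>A. chi (f i))"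
  by (induction A rule: finite_induct) (simp_all add: chi_def[of 0] chi_add)

lemma power_bexp_shift:
  assumes "\<And>x. v (x + 1) = - v x"
  shows "v (x + d) ^ bexp \<beta> = v x ^ bexp \<beta> * chi (\<beta> * d)"
  using assms by (cases d; cases \<beta>) (auto simp: chi_def bexp_def)

lemma prod_power_bexp_shift:
  assumes "\<And>x. v (x + 1) = - v x" and "finite I"
  shows "(\<Prod>t\<in>I. v (x t + d t) ^ bexp (b t))
       = (\<Prod>t\<in>I. v (x t) ^ bexp (b t)) * chi (\<Sum>t\<in>I. b t * d t)"
  by (simp add: power_bexp_shift[of v, OF assms(1)] prod.distrib chi_sum[OF assms(2)])

lemma sum_zero_by_sign_reversing_involution:
  fixes P :: "'a \<Rightarrow> 'b :: linordered_ab_group_add"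
  assumes "\<And>x. x \<in> V \<Longrightarrow> f x \<in> V" and "\<And>x. x \<in> V \<Longrightarrow> f (f x) = x"
    and "\<And>x. x \<in> V \<Longrightarrow> P (f x) = - P x"
  shows "sum P V = 0"
proof -
  have "sum P V = sum (\<lambda>x. P (f x)) V"
    by (rule sum.reindex_bij_witness[where i=f and j=f]) (use assms in auto)
  also have "\<dots> = - sum P V"
    using assms(3) by (simp add: sum_negf)
  finally show ?thesis
    by (simp add: equal_neg_zero)
qed

lemma interval_split: "k \<le> n \<Longrightarrow> {1..n} = {1..k} \<union> {k+1..(n::nat)}"
  by auto

lemma gdot_cong: "(\<And>j. j \<in> {k+1..n} \<Longrightarrow> x j = y j) \<Longrightarrow> gdot k n G i x = gdot k n G i y"
  unfolding gdot_def by (rule sum.cong) auto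

lemma row_sum_systematic:
  assumes "systematic k G" and "k \<le> n" and i: "i \<in> {1..k}"
  shows "(\<Sum>j\<in>{1..n}. G i j * x j) = x i + gdot k n G i x"
proof -
  have "(\<Sum>j\<in>{1..n}. G i j * x j) = (\<Sum>j\<in>{1..k}. G i j * x j) + (\<Sum>j\<in>{k+1..n}. G i j * x j)"
    unfolding interval_split[OF assms(2)] by (rule sum.union_disjoint) auto
  also have "(\<Sum>j\<in>{1..k}. G i j * x j) = (\<Sum>j\<in>{1..k}. if j = i then x i else 0)"
    by (rule sum.cong) (use assms in \<open>auto simp: systematic_def\<close>)
  also have "\<dots> = x i"
    using i by simp
  finally show ?thesis
    by (simp add: gdot_def)
qed

definition fibre :: "nat \<Rightarrow> nat \<Rightarrow> (nat \<Rightarrow> nat \<Rightarrow> bit) \<Rightarrow> (nat \<Rightarrow> bit) \<Rightarrow> (nat \<Rightarrow> bit) set" where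
  "fibre k n G \<gamma> = {x \<in> vecs {1..n}. \<forall>i\<in>{1..k}. (\<Sum>j\<in>{1..n}. G i j * x j) = \<gamma> i}"

definition lift :: "nat \<Rightarrow> nat \<Rightarrow> (nat \<Rightarrow> nat \<Rightarrow> bit) \<Rightarrow> (nat \<Rightarrow> bit) \<Rightarrow> (nat \<Rightarrow> bit) \<Rightarrow> nat \<Rightarrow> bit" where
  "lift k n G \<gamma> \<omega> = (\<lambda>j. if j \<in> {1..k} then \<gamma> j + gdot k n G j \<omega> else \<omega> j)"

lemma bij_betw_lift_fibre:
  assumes sys: "systematic k G" and kn: "k \<le> n"
  shows "bij_betw (lift k n G \<gamma>) (vecs {k+1..n}) (fibre k n G \<gamma>)"
proof (rule bij_betw_byWitness[where f'="\<lambda>x j. if j \<in> {k+1..n} then x j else 0"])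
  have gdot_lift: "gdot k n G i (lift k n G \<gamma> \<omega>) = gdot k n G i \<omega>" for i \<omega>
    by (rule gdot_cong) (simp add: lift_def)
  show "\<forall>x\<in>fibre k n G \<gamma>. lift k n G \<gamma> (\<lambda>j. if j \<in> {k+1..n} then x j else 0) = x"
  proof (intro ballI ext)
    fix x j assume x: "x \<in> fibre k n G \<gamma>"
    have "gdot k n G j (\<lambda>j. if j \<in> {k+1..n} then x j else 0) = gdot k n G j x"
      by (rule gdot_cong) simp
    moreover have "j \<in> {1..k} \<Longrightarrow> \<gamma> j = x j + gdot k n G j x"
      using x row_sum_systematic[OF sys kn] by (auto simp: fibre_def)
    ultimately show "lift k n G \<gamma> (\<lambda>j. if j \<in> {k+1..n} then x j else 0) j = x j"
      using x by (auto simp: lift_def fibre_def vecs_def add.assoc)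
  qed
  show "\<forall>\<omega>\<in>vecs {k+1..n}. (\<lambda>j. if j \<in> {k+1..n} then lift k n G \<gamma> \<omega> j else 0) = \<omega>"
    by (auto simp: lift_def vecs_def)
  show "lift k n G \<gamma> ` vecs {k+1..n} \<subseteq> fibre k n G \<gamma>"
  proof (intro image_subsetI)
    fix \<omega> assume "\<omega> \<in> vecs {k+1..n}"
    then have "lift k n G \<gamma> \<omega> \<in> vecs {1..n}"
      using kn by (auto simp: lift_def vecs_def)
    moreover have "(\<Sum>j\<in>{1..n}. G i j * lift k n G \<gamma> \<omega> j) = \<gamma> i" if i: "i \<in> {1..k}" for i
      unfolding row_sum_systematic[OF sys kn i] gdot_lift using i by (simp add: lift_def add.assoc)
    ultimately show "lift k n G \<gamma> \<omega> \<in> fibre k n G \<gamma>"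
      by (simp add: fibre_def)
  qed
  show "(\<lambda>x j. if j \<in> {k+1..n} then x j else 0) ` fibre k n G \<gamma> \<subseteq> vecs {k+1..n}"
    by (auto simp: vecs_def)
qed

lemma card_non_support: "card {t\<in>{1..n}. b t \<noteq> 1} = n - hweight n b"
proof -
  have "{t\<in>{1..n}. b t \<noteq> 1} = {1..n} - {t\<in>{1..n}. b t = 1}"
    by auto
  also have "card \<dots> = card {1..n} - card {t\<in>{1..n}. b t = 1}"
    by (rule card_Diff_subset) auto
  finally show ?thesis
    by (simp add: hweight_def)
qed

lemma T_as_lift_sum:
  assumes kn: "k \<le> n"
  shows "T k n G v b \<gamma> = 1 / 2 ^ (n - hweight n b) *
           (\<Sum>\<omega>\<in>vecs {k+1..n}. \<Prod>t\<in>{1..n}. v (lift k n G \<gamma> \<omega> t) ^ bexp (b t))"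
proof -
  have "(\<Prod>t\<in>{1..n}. v (lift k n G \<gamma> \<omega> t) ^ bexp (b t))
      = (\<Prod>t\<in>{1..k}. v (lift k n G \<gamma> \<omega> t) ^ bexp (b t))
        * (\<Prod>t\<in>{k+1..n}. v (lift k n G \<gamma> \<omega> t) ^ bexp (b t))" for \<omega>
    unfolding interval_split[OF kn] by (rule prod.union_disjoint) auto
  also have "\<dots> \<omega> = (\<Prod>i\<in>{1..k}. v (\<gamma> i + gdot k n G i \<omega>) ^ bexp (b i))
                    * (\<Prod>j\<in>{k+1..n}. v (\<omega> j) ^ bexp (b j))" for \<omega>
    by (auto simp: lift_def intro!: arg_cong2[where f=times] prod.cong)
  finally show ?thesis
    by (simp add: T_def)
qed

(* A vector b outside the code violates some parity check: for some free column j0,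
   b_j0 differs from \<Sum>_i b_i G_i,j0 (otherwise b would be the codeword spanned by b_1..b_k). *)
lemma not_in_code_witness:
  assumes sys: "systematic k G" and kn: "k \<le> n"
    and b: "b \<in> vecs {1..n}" "b \<notin> code k n G"
  shows "\<exists>j0\<in>{k+1..n}. b j0 + (\<Sum>i\<in>{1..k}. b i * G i j0) = 1"
proof (rule ccontr)
  assume "\<not> ?thesis"
  then have parity: "b j = (\<Sum>i\<in>{1..k}. b i * G i j)" if "j \<in> {k+1..n}" for j
    using that bit_add_eq_1_iff_neq by blast
  define c where "c = (\<lambda>i. if i \<in> {1..k} then b i else 0)"
  have "b j = (\<Sum>i\<in>{1..k}. c i * G i j)" if j: "j \<in> {1..n}" for j
  proof (cases "j \<le> k")
    case True
    have "(\<Sum>i\<in>{1..k}. c i * G i j) = (\<Sum>i\<in>{1..k}. if i = j then b j else 0)"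
      by (rule sum.cong) (use sys True j in \<open>auto simp: c_def systematic_def\<close>)
    then show ?thesis
      using True j by simp
  next
    case False
    then show ?thesis
      using parity j by (auto simp: c_def intro!: sum.cong)
  qed
  moreover have "c \<in> vecs {1..k}"
    by (simp add: c_def vecs_def)
  ultimately have "b \<in> code k n G"
    using b(1) unfolding code_def by blast
  with b(2) show False
    by blast
qed

(* Part (ii): toggling \<omega>_j0 at a violated check j0 shifts lift \<gamma> \<omega> by the vector d
   (column j0 of G on 1..k, the unit vector e_j0 on k+1..n), and b.d = 1, so the toggle is a
   sign-reversing involution on the summands of T(b,\<gamma>). *)
lemma T_vanishes_off_code:
  assumes sys: "systematic k G" and kn: "k \<le> n"
    and antisym: "\<And>x. v (x + 1) = - v x"
    and b: "b \<in> vecs {1..n}" "b \<notin> code k n G"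
  shows "T k n G v b \<gamma> = 0"
proof -
  obtain j0 where j0: "j0 \<in> {k+1..n}" and odd_check: "b j0 + (\<Sum>i\<in>{1..k}. b i * G i j0) = 1"
    using not_in_code_witness[OF sys kn b] by blast
  define toggle :: "(nat \<Rightarrow> bit) \<Rightarrow> nat \<Rightarrow> bit" where "toggle w = w(j0 := w j0 + 1)" for w
  define d :: "nat \<Rightarrow> bit" where "d t = (if t \<in> {1..k} then G t j0 else of_bool (t = j0))" for t
  define Q where "Q \<omega> = (\<Prod>t\<in>{1..n}. v (lift k n G \<gamma> \<omega> t) ^ bexp (b t))" for \<omega>
  have gdot_toggle: "gdot k n G i (toggle \<omega>) = gdot k n G i \<omega> + G i j0" for i \<omega>
  proof -
    have "gdot k n G i (toggle \<omega>) = (\<Sum>j\<in>{k+1..n}. G i j * \<omega> j + (if j = j0 then G i j0 else 0))"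
      unfolding gdot_def toggle_def by (rule sum.cong) (auto simp: distrib_left)
    then show ?thesis
      using j0 by (simp add: sum.distrib gdot_def)
  qed
  have lift_toggle: "lift k n G \<gamma> (toggle \<omega>) t = lift k n G \<gamma> \<omega> t + d t" if "t \<in> {1..n}" for \<omega> t
    using that j0 unfolding lift_def d_def by (simp add: gdot_toggle add.assoc) (simp add: toggle_def)
  have "(\<Sum>t\<in>{1..n}. b t * d t) = (\<Sum>t\<in>{1..k}. b t * G t j0) + (\<Sum>t\<in>{k+1..n}. b t * of_bool (t = j0))"
    unfolding interval_split[OF kn] by (subst sum.union_disjoint) (auto simp: d_def intro!: sum.cong)
  also have "\<dots> = 1"
    using j0 odd_check by (simp add: add.commute)
  finally have "chi (\<Sum>t\<in>{1..n}. b t * d t) = -1"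
    by (simp add: chi_def)
  then have "Q (toggle \<omega>) = - Q \<omega>" for \<omega>
    unfolding Q_def by (simp add: lift_toggle prod_power_bexp_shift[of v, OF antisym])
  moreover have "toggle \<omega> \<in> vecs {k+1..n}" if "\<omega> \<in> vecs {k+1..n}" for \<omega>
    using that j0 by (auto simp: toggle_def vecs_def)
  moreover have "toggle (toggle \<omega>) = \<omega>" for \<omega>
    by (simp add: toggle_def add.assoc)
  ultimately have "sum Q (vecs {k+1..n}) = 0"
    by (intro sum_zero_by_sign_reversing_involution)
  then show ?thesis
    by (simp add: T_as_lift_sum[OF kn] Q_def)
qed

(* Part (iii): for b = 0 every summand is 1, and there are 2^(n-k) of them. *)
lemma T_at_zero:
  assumes "k \<le> n"
  shows "T k n G v (\<lambda>_. 0) \<gamma> = 1 / 2 ^ k"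
proof -
  have "T k n G v (\<lambda>_. 0) \<gamma> = 1 / 2 ^ n * card (vecs {k+1..n})"
    by (simp add: T_def hweight_def bexp_def)
  also have "\<dots> = 2 ^ (n - k) / 2 ^ (k + (n - k))"
    using assms by (simp add: card_vecs)
  finally show ?thesis
    by (simp add: power_add)
qed

(* If P(Z = x) = 1/2 + v x for a bit-valued Z, then v(1) = -v(0), since the two
   probabilities add up to 1. *)
lemma (in prob_space) antisymmetric_of_marginal:
  fixes Z :: "'a \<Rightarrow> bit" and v :: "bit \<Rightarrow> real"
  assumes Z: "Z \<in> measurable M (count_space UNIV)"
    and marg: "\<And>x. prob {w \<in> space M. Z w = x} = 1/2 + v x"
  shows "v (x + 1) = - v x"
proof -
  have ev: "{w \<in> space M. Z w = 0} \<in> events"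
    using measurable_sets[OF Z, of "{0}"] by (simp add: vimage_def Int_def conj_commute)
  have "{w \<in> space M. Z w = 1} = space M - {w \<in> space M. Z w = 0}"
    by auto
  then have "1/2 + v 1 = 1 - (1/2 + v 0)"
    using prob_compl[OF ev] marg by metis
  then show ?thesis
    by (cases x) auto
qed

lemma (in prob_space) prob_of_indep_bits:
  assumes I: "finite I" "I \<noteq> {}"
    and meas: "\<forall>j\<in>I. X j \<in> measurable M (count_space UNIV)"
    and indep: "indep_vars (\<lambda>_. count_space UNIV) X I"
  shows "prob {w \<in> space M. Q (\<lambda>j. if j \<in> I then X j w else 0)}
       = (\<Sum>x\<in>{x \<in> vecs I. Q x}. \<Prod>j\<in>I. prob {w \<in> space M. X j w = x j})"
proof -
  define S where "S = {x \<in> vecs I. Q x}"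
  define A where "A x = (\<Inter>j\<in>I. X j -` {x j} \<inter> space M)" for x
  have event_split: "{w \<in> space M. Q (\<lambda>j. if j \<in> I then X j w else 0)} = (\<Union>x\<in>S. A x)"
  proof (intro set_eqI iffI)
    fix w assume w: "w \<in> {w \<in> space M. Q (\<lambda>j. if j \<in> I then X j w else 0)}"
    then have "(\<lambda>j. if j \<in> I then X j w else 0) \<in> S"
      by (simp add: S_def vecs_def)
    moreover have "w \<in> A (\<lambda>j. if j \<in> I then X j w else 0)"
      using w I(2) by (simp add: A_def)
    ultimately show "w \<in> (\<Union>x\<in>S. A x)"
      by blast
  next
    fix w assume "w \<in> (\<Union>x\<in>S. A x)"
    then obtain x where x: "x \<in> S" "w \<in> A x"
      by blast
    then have "(\<lambda>j. if j \<in> I then X j w else 0) = x"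
      using I(2) by (auto simp: A_def S_def vecs_def)
    with x I(2) show "w \<in> {w \<in> space M. Q (\<lambda>j. if j \<in> I then X j w else 0)}"
      by (auto simp: S_def A_def)
  qed
  have "A x \<in> events" for x
    unfolding A_def using I meas by (intro sets.finite_INT) (auto intro: measurable_sets)
  moreover have "disjoint_family_on A S"
    unfolding disjoint_family_on_def S_def A_def vecs_def by (force simp: fun_eq_iff)
  moreover have "finite S"
    using finite_vecs[OF I(1)] by (simp add: S_def)
  ultimately have "prob (\<Union>x\<in>S. A x) = (\<Sum>x\<in>S. prob (A x))"
    by (intro finite_measure_finite_Union) auto
  also have "\<dots> = (\<Sum>x\<in>S. \<Prod>j\<in>I. prob (X j -` {x j} \<inter> space M))"
    unfolding A_def using I by (intro sum.cong indep_varsD_finite[OF indep]) auto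
  finally show ?thesis
    unfolding event_split S_def by (simp add: vimage_def Int_def conj_commute)
qed

(* Part (i): sum the product of marginals over the fibre, parametrise the fibre by the free
   coordinates, expand each product, and exchange the two sums. *)
lemma (in prob_space) prob_Ybar_eq_sum_T:
  assumes sys: "systematic k G" and kn: "k < n"
    and meas: "\<forall>j\<in>{1..n}. X j \<in> measurable M (count_space UNIV)"
    and indep: "indep_vars (\<lambda>_. count_space UNIV) X {1..n}"
    and marg: "\<forall>j\<in>{1..n}. \<forall>x. prob {w \<in> space M. X j w = x} = 1/2 + v x"
  shows "prob {w \<in> space M. \<forall>i\<in>{1..k}. Ybar n G X i w = \<gamma> i} = (\<Sum>b\<in>vecs {1..n}. T k n G v b \<gamma>)"
proof -
  let ?V = "vecs {k+1..n}"
  let ?lift = "lift k n G \<gamma>"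
  have Ybar_restrict: "Ybar n G X i w = (\<Sum>j\<in>{1..n}. G i j * (if j \<in> {1..n} then X j w else 0))" for i w
    unfolding Ybar_def by (rule sum.cong) auto
  have "prob {w \<in> space M. \<forall>i\<in>{1..k}. Ybar n G X i w = \<gamma> i}
      = (\<Sum>x\<in>fibre k n G \<gamma>. \<Prod>j\<in>{1..n}. prob {w \<in> space M. X j w = x j})"
    unfolding Ybar_restrict fibre_def using kn meas indep by (intro prob_of_indep_bits) auto
  also have "\<dots> = (\<Sum>x\<in>fibre k n G \<gamma>. \<Prod>j\<in>{1..n}. 1/2 + v (x j))"
    using marg by (intro sum.cong prod.cong) auto
  also have "\<dots> = (\<Sum>\<omega>\<in>?V. \<Prod>t\<in>{1..n}. 1/2 + v (?lift \<omega> t))"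
    using kn by (intro sum.reindex_bij_betw[symmetric] bij_betw_lift_fibre[OF sys]) auto
  also have "\<dots> = (\<Sum>\<omega>\<in>?V. \<Sum>b\<in>vecs {1..n}. 1 / 2 ^ (n - hweight n b) *
                     (\<Prod>t\<in>{1..n}. v (?lift \<omega> t) ^ bexp (b t)))"
    by (simp only: prod_plus_expand[OF finite_atLeastAtMost] card_non_support power_one_over)
  also have "\<dots> = (\<Sum>b\<in>vecs {1..n}. T k n G v b \<gamma>)"
    using kn by (subst sum.swap) (simp add: T_as_lift_sum sum_distrib_left)
  finally show ?thesis .
qed

theorem mainTheorem2:
  fixes M :: "'a measure" and X :: "nat \<Rightarrow> 'a \<Rightarrow> bit" and v :: "bit \<Rightarrow> real"
    and G :: "nat \<Rightarrow> nat \<Rightarrow> bit" and k n :: nat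
  assumes "prob_space M"
    and "k < n"
    and "systematic k G"
    and "\<forall>i\<in>{1..n}. X i \<in> measurable M (count_space UNIV)"
    and "prob_space.indep_vars M (\<lambda>_. count_space UNIV) X {1..n}"
    and "\<forall>i\<in>{1..n}. \<forall>x. measure M {\<omega> \<in> space M. X i \<omega> = x} = 1/2 + v x"
  shows "(\<forall>\<gamma>\<in>vecs {1..k}.
           measure M {\<omega> \<in> space M. \<forall>i\<in>{1..k}. Ybar n G X i \<omega> = \<gamma> i}
             = (\<Sum>b\<in>vecs {1..n}. T k n G v b \<gamma>))
         \<and> (\<forall>b\<in>vecs {1..n} - code k n G. \<forall>\<gamma>\<in>vecs {1..k}. T k n G v b \<gamma> = 0)
         \<and> (\<forall>\<gamma>\<in>vecs {1..k}. T k n G v (\<lambda>_. 0) \<gamma> = 1 / 2 ^ k)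
         \<and> (\<forall>\<gamma>\<in>vecs {1..k}.
           measure M {\<omega> \<in> space M. \<forall>i\<in>{1..k}. Ybar n G X i \<omega> = \<gamma> i} - 1 / 2 ^ k
             = (\<Sum>b\<in>code k n G - {\<lambda>_. 0}. T k n G v b \<gamma>))"
proof -
  interpret prob_space M by fact
  have kn: "k \<le> n" using assms(2) by simp
  have antisym: "v (x + 1) = - v x" for x
    using assms(2,4,6) by (intro antisymmetric_of_marginal[of "X 1"]) auto
  note part_i = prob_Ybar_eq_sum_T[OF assms(3,2,4,5,6)]
  note part_ii = T_vanishes_off_code[of k G n v, OF assms(3) kn antisym]
  note part_iii = T_at_zero[OF kn]
  have "(\<Sum>b\<in>vecs {1..n}. T k n G v b \<gamma>) = (\<Sum>b\<in>code k n G. T k n G v b \<gamma>)" for \<gamma>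
    using part_ii by (intro sum.mono_neutral_right finite_vecs) (auto simp: code_def)
  also have "\<dots> \<gamma> = T k n G v (\<lambda>_. 0) \<gamma> + (\<Sum>b\<in>code k n G - {\<lambda>_. 0}. T k n G v b \<gamma>)" for \<gamma>
  proof (rule sum.remove)
    show "finite (code k n G)"
      using finite_vecs[of "{1..n}"] by (auto simp: code_def)
    show "(\<lambda>_. 0) \<in> code k n G"
      by (auto simp: code_def vecs_def intro!: bexI[of _ "\<lambda>_. 0"])
  qed
  finally show ?thesis
    using part_i part_ii part_iii by auto
qed

end
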